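(* The unique family of formal power series $(T_q^\circ)_{q\in\mathbb X}$ solving (FP) is given by $$T_q^\circ(z)=1+\sum_{n=1}^\infty\frac1{n!}\int_{\mathbb X^n}\sum_{(T,(P_i)_{0\le i\le n})\in\mathcal{TP}_n^\circ}w\big(T,(P_i)_{0\le i\le n};q,x_1,\dots,x_n\big)\,z(\mathrm dx_1)\cdots z(\mathrm dx_n),$$ i.e. $t_n(q;x_1,\dots,x_n)=\sum_{(T,(P_i))\in\mathcal{TP}_n^\circ}w(T,(P_i);q,x_1,\dots,x_n)$ for all $n\ge1$.
   Context: Setting: $(\mathbb X,\mathcal X)$ a measurable space; for $n\ge1$, $A_n:\mathbb X\times\mathbb X^n\to\mathbb C$ measurable, symmetric in the last $n$ variables. $(T_q^\circ)_{q}$ with $T_q^\circ(\nu)=1+\sum_{n\ge1}\frac1{n!}\int t_n(q;x_1,\dots,x_n)\nu(\mathrm dx_1)\cdots\nu(\mathrm dx_n)$ is the unique family of formal power series (coefficients measurable, symmetric in the $x$'s) satisfying the fixed point equation (FP) $$T_q^\circ(\nu)=\exp\Big(\sum_{n\ge1}\frac1{n!}\int A_n(q;x_1,\dots,x_n)\prod_{i=1}^nT_{x_i}^\circ(\nu)\,\nu(\mathrm dx_1)\cdots\nu(\mathrm dx_n)\Big)$$ in the sense of formal power series; equivalently, with $t_0:=1$ and $[n]=\{1,\dots,n\}$, for all $n\ge1$: $t_n(q;x_1,\dots,x_n)=\sum_{m=1}^n\sum_{\{J_1,\dots,J_m\}}\prod_{\ell=1}^mB_{\#J_\ell}(q;(x_j)_{j\in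 J_\ell})$ (sum over set partitions of $[n]$), where $B_n(q;x_1,\dots,x_n)=\sum_{\emptyset\ne J\subset[n]}A_{\#J}(q;(x_j)_{j\in J})\sum_{(V_j)_{j\in J}}\prod_{j\in J}t_{\#V_j}(x_j;(x_v)_{v\in V_j})$, the inner sum over families of pairwise disjoint, possibly empty sets $V_j$ with union $[n]\setminus J$. Enriched trees: $\mathcal{TP}_n^\circ$ is the set of pairs $(T,(P_i)_{0\le i\le n})$ where $T$ is a tree on vertex set $\{0,1,\dots,n\}$, rooted at $0$, and for each vertex $i$, $P_i$ is a set partition (into non-empty blocks) of the set of children of $i$ in $T$ ($P_i=\emptyset$ if $i$ is a leaf). Its weight is $$w(T,(P_i);x_0,x_1,\dots,x_n):=\prod_{i=0}^n\prod_{J\in P_i}A_{\#J}\big(x_i;(x_j)_{j\in J}\big),$$ with empty products equal to $1$. *)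

theory Defs
  imports Complex_Main "HOL-Library.Disjoint_Sets" "HOL-Library.Multiset"
begin

(* Conventions: points x_0 = q, x_1, ..., x_n are encoded by an index function
   y :: nat => 'a (y i = x_i).  A function of the n variables (x_j)_{j in J}
   is evaluated on the list of the x_j in increasing order of j. *)

definition args :: "(nat \<Rightarrow> 'a) \<Rightarrow> nat set \<Rightarrow> 'a list" where
  "args y J = map y (sorted_list_of_set J)"

definition tz :: "('a \<Rightarrow> 'a list \<Rightarrow> complex) \<Rightarrow> 'a \<Rightarrow> (nat \<Rightarrow> 'a) \<Rightarrow> nat set \<Rightarrow> complex" where
  "tz t p y V = (if V = {} then 1 else t p (args y V))"

definition disj_families :: "nat set \<Rightarrow> nat set \<Rightarrow> (nat \<Rightarrow> nat set) set" where
  "disj_families J R = {V. (\<forall>j. j \<notin> J \<longrightarrow> V j = {})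
      \<and> (\<forall>i\<in>J. \<forall>j\<in>J. i \<noteq> j \<longrightarrow> V i \<inter> V j = {})
      \<and> (\<Union>j\<in>J. V j) = R}"

definition Bfun :: "('a \<Rightarrow> 'a list \<Rightarrow> complex) \<Rightarrow> ('a \<Rightarrow> 'a list \<Rightarrow> complex)
    \<Rightarrow> 'a \<Rightarrow> (nat \<Rightarrow> 'a) \<Rightarrow> nat set \<Rightarrow> complex" where
  "Bfun A t q y N = (\<Sum>J\<in>{J. J \<subseteq> N \<and> J \<noteq> {}}.
      A q (args y J) * (\<Sum>V\<in>disj_families J (N - J). \<Prod>j\<in>J. tz t (y j) y (V j)))"

definition FP_rhs :: "('a \<Rightarrow> 'a list \<Rightarrow> complex) \<Rightarrow> ('a \<Rightarrow> 'a list \<Rightarrow> complex)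
    \<Rightarrow> 'a \<Rightarrow> 'a list \<Rightarrow> complex" where
  "FP_rhs A t q xs = (let y = (\<lambda>i. (q # xs) ! i) in
     (\<Sum>P\<in>{P. partition_on {1..length xs} P}. \<Prod>J\<in>P. Bfun A t q y J))"

(* Rooted trees on {0,...,n} with root 0, encoded by their parent map:
   par i is the parent of i for 1 <= i <= n; par j = 0 outside {1..n} (normalisation). *)
definition rooted_trees :: "nat \<Rightarrow> (nat \<Rightarrow> nat) set" where
  "rooted_trees n = {par. (\<forall>i\<in>{1..n}. par i \<in> {0..n} \<and> (\<exists>k. (par ^^ k) i = 0))
      \<and> (\<forall>j. j \<notin> {1..n} \<longrightarrow> par j = 0)}"

definition children :: "nat \<Rightarrow> (nat \<Rightarrow> nat) \<Rightarrow> nat \<Rightarrow> nat set" where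
  "children n par i = {j\<in>{1..n}. par j = i}"

definition enriched_trees :: "nat \<Rightarrow> ((nat \<Rightarrow> nat) \<times> (nat \<Rightarrow> nat set set)) set" where
  "enriched_trees n = {(par, P). par \<in> rooted_trees n
      \<and> (\<forall>i\<in>{0..n}. partition_on (children n par i) (P i))
      \<and> (\<forall>i. i \<notin> {0..n} \<longrightarrow> P i = {})}"

definition tree_weight :: "('a \<Rightarrow> 'a list \<Rightarrow> complex) \<Rightarrow> nat \<Rightarrow> (nat \<Rightarrow> nat set set)
    \<Rightarrow> 'a list \<Rightarrow> complex" where
  "tree_weight A n P xs0 = (\<Prod>i\<in>{0..n}. \<Prod>J\<in>P i. A (xs0 ! i) (args (\<lambda>j. xs0 ! j) J))"

end

theory Submission
  imports Defs
begin

text \<open>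
  Both sides satisfy the same recursion, so they agree by induction on the number of points.
  Group the root blocks of an enriched tree by the subtrees hanging below them: an enriched
  tree on a vertex set is a set partition of the non-root vertices together with, for each
  part, a tree on it whose root has a single block. Such a planted tree consists in turn of
  its root block \<open>J\<close>, a family \<open>(V\<^sub>j)\<^sub>j\<^sub>\<in>\<^sub>J\<close> of disjoint vertex sets, and for each \<open>j \<in> J\<close>
  an enriched tree rooted at \<open>j\<close> on \<open>V\<^sub>j\<close>. Summing weights along these two decompositions
  reproduces the sum over set partitions and the sum over families \<open>(V\<^sub>j)\<close> in the fixed
  point equation. Since subtrees live on arbitrary vertex sets, the equation is first
  transported from \<open>{1..n}\<close> to arbitrary finite index sets, using the symmetry of \<open>A\<close> and \<open>t\<close>.
\<close>

definition block_edge :: "(nat \<Rightarrow> nat set set) \<Rightarrow> nat \<Rightarrow> nat \<Rightarrow> bool" where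
  "block_edge P i v \<longleftrightarrow> (\<exists>J\<in>P i. v \<in> J)"

text \<open>
  An enriched tree rooted at \<open>r\<close> with non-root vertices \<open>S\<close>, described by its blocks alone:
  \<open>P i\<close> partitions the children of \<open>i\<close>, so the parent of \<open>v\<close> is the unique \<open>i\<close> with a block
  containing \<open>v\<close>. Acyclicity follows from reachability from \<open>r\<close> once \<open>r \<notin> S\<close>.
\<close>
definition block_tree :: "nat \<Rightarrow> nat set \<Rightarrow> (nat \<Rightarrow> nat set set) \<Rightarrow> bool" where
  "block_tree r S P \<longleftrightarrow> (\<forall>i. i \<notin> insert r S \<longrightarrow> P i = {})
     \<and> (\<forall>i. \<forall>J\<in>P i. J \<noteq> {} \<and> J \<subseteq> S)
     \<and> (\<forall>i i' J J'. J \<in> P i \<longrightarrow> J' \<in> P i' \<longrightarrow> J \<inter> J' \<noteq> {} \<longrightarrow> i = i' \<and> J = J')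
     \<and> (\<forall>v\<in>S. (block_edge P)\<^sup>*\<^sup>* r v)"

definition block_trees :: "nat \<Rightarrow> nat set \<Rightarrow> (nat \<Rightarrow> nat set set) set" where
  "block_trees r S = {P. block_tree r S P}"

definition planted_block_trees :: "nat \<Rightarrow> nat set \<Rightarrow> (nat \<Rightarrow> nat set set) set" where
  "planted_block_trees r S = {P. block_tree r S P \<and> (\<exists>J. P r = {J})}"

definition blocks :: "(nat \<Rightarrow> nat set set) \<Rightarrow> (nat \<times> nat set) set" where
  "blocks P = {(i, J). J \<in> P i}"

definition block_weight :: "(nat \<Rightarrow> nat set \<Rightarrow> complex) \<Rightarrow> (nat \<Rightarrow> nat set set) \<Rightarrow> complex" where
  "block_weight a P = (\<Prod>(i, J)\<in>blocks P. a i J)"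

definition restrict_blocks :: "(nat \<Rightarrow> nat set set) \<Rightarrow> nat set \<Rightarrow> nat \<Rightarrow> nat set set" where
  "restrict_blocks P U i = (if i \<in> U then P i else {})"

definition descendants :: "(nat \<Rightarrow> nat set set) \<Rightarrow> nat \<Rightarrow> nat set" where
  "descendants P c = {v. (block_edge P)\<^sup>*\<^sup>* c v}"

lemma block_treeD:
  assumes "block_tree r S P"
  shows "\<And>i. i \<notin> insert r S \<Longrightarrow> P i = {}"
    and "\<And>i J. J \<in> P i \<Longrightarrow> J \<noteq> {}"
    and "\<And>i J. J \<in> P i \<Longrightarrow> J \<subseteq> S"
    and "\<And>i i' J J'. J \<in> P i \<Longrightarrow> J' \<in> P i' \<Longrightarrow> J \<inter> J' \<noteq> {} \<Longrightarrow> i = i' \<and> J = J'"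
    and "\<And>v. v \<in> S \<Longrightarrow> (block_edge P)\<^sup>*\<^sup>* r v"
  using assms unfolding block_tree_def
  by (simp_all only: Ball_def) (metis insert_iff)+

lemma block_edge_rtranclp_mono:
  assumes "\<And>i. P i \<subseteq> P' i" and "(block_edge P)\<^sup>*\<^sup>* a b"
  shows "(block_edge P')\<^sup>*\<^sup>* a b"
proof -
  have "block_edge P \<le> block_edge P'"
    using assms(1) unfolding block_edge_def le_fun_def le_bool_def by blast
  with assms(2) show ?thesis using rtranclp_mono by blast
qed

lemma reach_closed:
  assumes "\<And>u w. u \<in> U \<Longrightarrow> block_edge P u w \<Longrightarrow> w \<in> U"
  shows "(block_edge P)\<^sup>*\<^sup>* a v \<Longrightarrow> a \<in> U \<Longrightarrow> v \<in> U"
  by (induction rule: rtranclp_induct) (use assms in auto)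

lemma reach_restrict:
  assumes "\<And>u w. u \<in> U \<Longrightarrow> block_edge P u w \<Longrightarrow> w \<in> U"
    and "\<And>u. u \<in> U \<Longrightarrow> P' u = P u"
  shows "(block_edge P)\<^sup>*\<^sup>* a v \<Longrightarrow> a \<in> U \<Longrightarrow> (block_edge P')\<^sup>*\<^sup>* a v"
proof (induction rule: rtranclp_induct)
  case (step u w)
  have "u \<in> U" using reach_closed[OF assms(1) step(1,4)] .
  hence "block_edge P' u w" using step(2) assms(2) by (simp add: block_edge_def)
  then show ?case using step by (meson rtranclp.rtrancl_into_rtrancl)
qed simp

lemma descendants_self: "c \<in> descendants P c"
  by (simp add: descendants_def)

lemma descendants_closed: "u \<in> descendants P c \<Longrightarrow> block_edge P u w \<Longrightarrow> w \<in> descendants P c"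
  by (auto simp: descendants_def intro: rtranclp.rtrancl_into_rtrancl)

lemma finite_block_trees:
  assumes "finite S"
  shows "finite (block_trees r S)"
proof (rule finite_subset)
  show "block_trees r S \<subseteq>
      {P. \<forall>x. (x \<in> insert r S \<longrightarrow> P x \<in> Pow (Pow S)) \<and> (x \<notin> insert r S \<longrightarrow> P x = {})}"
    unfolding block_trees_def using block_treeD(1,3) by blast
  show "finite \<dots>" using assms by (intro finite_set_of_finite_funs) auto
qed

lemma finite_planted_block_trees: "finite S \<Longrightarrow> finite (planted_block_trees r S)"
  by (rule finite_subset[OF _ finite_block_trees])
     (auto simp: planted_block_trees_def block_trees_def)

lemma block_trees_empty: "block_trees r {} = {\<lambda>_. {}}"
proof -
  have "P = (\<lambda>_. {})" if "block_tree r {} P" for P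
  proof
    show "P i = {}" for i
      using block_treeD(1)[OF that, of i] block_treeD(2,3)[OF that] by (cases "i = r") auto
  qed
  then show ?thesis by (auto simp: block_trees_def block_tree_def)
qed

lemma block_weight_empty: "block_weight a (\<lambda>_. {}) = 1"
  by (simp add: block_weight_def blocks_def)

context
  fixes r S P
  assumes tree: "block_tree r S P"
begin

lemma block_tree_edge_in: "block_edge P i v \<Longrightarrow> v \<in> S \<and> i \<in> insert r S"
  unfolding block_edge_def using block_treeD(1,3)[OF tree] by (metis empty_iff subsetD)

lemma block_tree_parent_unique: "block_edge P i v \<Longrightarrow> block_edge P i' v \<Longrightarrow> i = i'"
  unfolding block_edge_def using block_treeD(4)[OF tree] by blast

lemma block_tree_reach_in: "(block_edge P)\<^sup>*\<^sup>* a v \<Longrightarrow> a \<in> S \<Longrightarrow> v \<in> S"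
  by (induction rule: rtranclp_induct) (auto dest: block_tree_edge_in)

lemma block_tree_reach_comparable:
  assumes "(block_edge P)\<^sup>*\<^sup>* a v"
  shows "(block_edge P)\<^sup>*\<^sup>* b v \<Longrightarrow> (block_edge P)\<^sup>*\<^sup>* a b \<or> (block_edge P)\<^sup>*\<^sup>* b a"
  using assms
proof (induction rule: rtranclp_induct)
  case (step u w)
  from step.prems show ?case
  proof (cases rule: rtranclp.cases)
    case (rtrancl_into_rtrancl p)
    with step block_tree_parent_unique have "p = u" by blast
    with rtrancl_into_rtrancl step show ?thesis by blast
  qed (use step in auto)
qed blast

lemma finite_blocks: "finite S \<Longrightarrow> finite (blocks P)"
proof -
  have "blocks P \<subseteq> insert r S \<times> Pow S"
    unfolding blocks_def using block_treeD(1,3)[OF tree] by blast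
  then show "finite S \<Longrightarrow> finite (blocks P)" by (meson finite_Pow_iff finite_SigmaI finite_insert finite_subset)
qed

lemma descendants_subset: "c \<in> S \<Longrightarrow> descendants P c \<subseteq> S"
  by (auto simp: descendants_def dest: block_tree_reach_in)

context
  assumes root: "r \<notin> S"
begin

lemma block_tree_reach_root: "(block_edge P)\<^sup>*\<^sup>* a r \<Longrightarrow> a = r"
  by (erule rtranclp.cases) (auto dest: block_tree_edge_in simp: root)

lemma descendants_disjoint:
  assumes "block_edge P r c" "block_edge P r c'" "c \<noteq> c'"
  shows "descendants P c \<inter> descendants P c' = {}"
proof (rule ccontr)
  assume "descendants P c \<inter> descendants P c' \<noteq> {}"
  then obtain v where v: "(block_edge P)\<^sup>*\<^sup>* c v" "(block_edge P)\<^sup>*\<^sup>* c' v"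
    by (auto simp: descendants_def)
  have cS: "c \<in> S" "c' \<in> S" using assms block_tree_edge_in by blast+
  \<comment> \<open>a child of the root can only be reached from the root or itself\<close>
  have no_reach: False if "(block_edge P)\<^sup>*\<^sup>* x x'" "x \<noteq> x'" "block_edge P r x'" "x \<in> S" for x x'
    using that(1)
  proof (cases rule: rtranclp.cases)
    case (rtrancl_into_rtrancl p)
    with that block_tree_parent_unique have "p = r" by blast
    with rtrancl_into_rtrancl have "x = r" using block_tree_reach_root by blast
    with that root show ?thesis by simp
  qed (use that in simp)
  from block_tree_reach_comparable[OF v] show False
    using no_reach[of c c'] no_reach[of c' c] assms cS by auto
qed

lemma descendants_cover:
  assumes "v \<in> S"
  shows "\<exists>c. block_edge P r c \<and> v \<in> descendants P c"
  using block_treeD(5)[OF tree assms]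
proof (cases rule: converse_rtranclpE)
  case base
  then show ?thesis using assms root by simp
qed (auto simp: descendants_def)

lemma block_tree_restrict_descendants:
  assumes c: "block_edge P r c"
  shows "block_tree c (descendants P c - {c}) (restrict_blocks P (descendants P c))"
proof -
  have cS: "c \<in> S" using c block_tree_edge_in by blast
  let ?D = "descendants P c" and ?P' = "restrict_blocks P (descendants P c)"
  have blk: "J \<subseteq> ?D - {c}" if "i \<in> ?D" "J \<in> P i" for i J
  proof
    fix v assume "v \<in> J"
    hence e: "block_edge P i v" using that by (auto simp: block_edge_def)
    hence "v \<in> ?D" using descendants_closed that by blast
    moreover have "v \<noteq> c"
    proof
      assume "v = c"
      with e c block_tree_parent_unique have "i = r" by blast
      with that descendants_subset[OF cS] root show False by blast
    qed
    ultimately show "v \<in> ?D - {c}" by simp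
  qed
  have reach: "(block_edge ?P')\<^sup>*\<^sup>* c v" if "v \<in> ?D" for v
    using reach_restrict[of ?D P ?P' c v] that descendants_closed descendants_self
    by (auto simp: descendants_def restrict_blocks_def)
  show ?thesis
    unfolding block_tree_def
  proof (intro conjI allI impI ballI)
    fix i J assume "J \<in> ?P' i"
    then show "J \<noteq> {}"
      using block_treeD(2)[OF tree] by (auto simp: restrict_blocks_def split: if_splits)
  next
    fix i J assume "J \<in> ?P' i"
    then show "J \<subseteq> ?D - {c}"
      using blk by (auto simp: restrict_blocks_def split: if_splits)
  next
    fix i i' J J' assume "J \<in> ?P' i" "J' \<in> ?P' i'" "J \<inter> J' \<noteq> {}"
    then show "i = i'" "J = J'"
      using block_treeD(4)[OF tree] by (auto simp: restrict_blocks_def split: if_splits)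
  qed (use descendants_self[of c P] reach in \<open>auto simp: restrict_blocks_def\<close>)
qed

end

end

lemma disj_familiesD:
  assumes "V \<in> disj_families J R"
  shows "\<And>j. j \<notin> J \<Longrightarrow> V j = {}"
    and "\<And>i j. i \<in> J \<Longrightarrow> j \<in> J \<Longrightarrow> i \<noteq> j \<Longrightarrow> V i \<inter> V j = {}"
    and "(\<Union>j\<in>J. V j) = R"
    and "\<And>j. j \<in> J \<Longrightarrow> V j \<subseteq> R"
  using assms unfolding disj_families_def by simp_all blast

lemma finite_disj_families:
  assumes "finite R" "finite J"
  shows "finite (disj_families J R)"
proof (rule finite_subset)
  show "disj_families J R \<subseteq> {V. \<forall>x. (x \<in> J \<longrightarrow> V x \<in> Pow R) \<and> (x \<notin> J \<longrightarrow> V x = {})}"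
    using disj_familiesD(1,4) by blast
  show "finite \<dots>" using assms by (intro finite_set_of_finite_funs) auto
qed

definition graft :: "nat \<Rightarrow> nat set \<Rightarrow> (nat \<Rightarrow> nat \<Rightarrow> nat set set) \<Rightarrow> nat \<Rightarrow> nat set set" where
  "graft r J F i = (if i = r then {J} else {}) \<union> (\<Union>j\<in>J. F j i)"

definition graft_data ::
    "nat set \<Rightarrow> (nat set \<times> (nat \<Rightarrow> nat set) \<times> (nat \<Rightarrow> nat \<Rightarrow> nat set set)) set" where
  "graft_data N = (SIGMA J:{J. J \<subseteq> N \<and> J \<noteq> {}}. SIGMA V:disj_families J (N - J).
                     PiE J (\<lambda>j. block_trees j (V j)))"

locale grafting =
  fixes r N J V F
  assumes root_notin: "r \<notin> N" and root_block: "J \<subseteq> N" "J \<noteq> {}"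
    and family: "V \<in> disj_families J (N - J)"
    and subtrees: "F \<in> PiE J (\<lambda>j. block_trees j (V j))"
begin

lemma subtree: "j \<in> J \<Longrightarrow> block_tree j (V j) (F j)"
  using subtrees by (auto simp: block_trees_def)

lemma family_subset: "j \<in> J \<Longrightarrow> V j \<subseteq> N - J"
  using disj_familiesD(4)[OF family] by blast

lemma subtree_block: "j \<in> J \<Longrightarrow> K \<in> F j i \<Longrightarrow> i \<in> insert j (V j) \<and> K \<subseteq> V j \<and> K \<noteq> {}"
  using block_treeD(1,2,3)[OF subtree] by blast

lemma vertex_sets_disjoint:
  "j \<in> J \<Longrightarrow> j' \<in> J \<Longrightarrow> j \<noteq> j' \<Longrightarrow> insert j (V j) \<inter> insert j' (V j') = {}"
  using family_subset disj_familiesD(2)[OF family] by blast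

lemma subtree_at_root: "j \<in> J \<Longrightarrow> F j r = {}"
  using subtree_block family_subset root_block root_notin by (metis DiffE empty_iff equals0I insertE subsetD)

lemma graft_root: "graft r J F r = {J}"
  using subtree_at_root by (auto simp: graft_def)

lemma graft_eq_subtree: "j \<in> J \<Longrightarrow> i \<in> insert j (V j) \<Longrightarrow> graft r J F i = F j i"
proof -
  assume j: "j \<in> J" and i: "i \<in> insert j (V j)"
  have "i \<noteq> r" using i j family_subset root_block root_notin by blast
  moreover have "F j' i = {}" if "j' \<in> J" "j' \<noteq> j" for j'
    using vertex_sets_disjoint[OF j that(1)] that i subtree_block[OF that(1)] by blast
  ultimately show ?thesis unfolding graft_def using j by auto
qed

lemma subtree_reach_graft: "j \<in> J \<Longrightarrow> (block_edge (F j))\<^sup>*\<^sup>* a v \<Longrightarrow> (block_edge (graft r J F))\<^sup>*\<^sup>* a v"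
  by (erule block_edge_rtranclp_mono[rotated]) (auto simp: graft_def)

lemma graft_blocks_disjoint:
  assumes K: "K \<in> graft r J F i" and K': "K' \<in> graft r J F i'" and meet: "K \<inter> K' \<noteq> {}"
  shows "i = i' \<and> K = K'"
proof -
  have cases: "(i = r \<and> K = J) \<or> (\<exists>j\<in>J. K \<in> F j i)" if "K \<in> graft r J F i" for i K
    using that unfolding graft_def by (auto split: if_splits)
  from cases[OF K] cases[OF K'] show ?thesis
  proof (elim disjE conjE bexE)
    fix j' assume "i = r" "K = J" "K' \<in> F j' i'" "j' \<in> J"
    then show ?thesis using meet subtree_block family_subset by blast
  next
    fix j assume "i' = r" "K' = J" "K \<in> F j i" "j \<in> J"
    then show ?thesis using meet subtree_block family_subset by blast
  next
    fix j j' assume a: "K \<in> F j i" "j \<in> J" "K' \<in> F j' i'" "j' \<in> J"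
    have "j = j'"
    proof (rule ccontr)
      assume "j \<noteq> j'"
      then have "V j \<inter> V j' = {}" using disj_familiesD(2)[OF family] a by blast
      then show False using a meet subtree_block by blast
    qed
    then show ?thesis using a meet block_treeD(4)[OF subtree] by blast
  qed auto
qed

lemma graft_reach:
  assumes v: "v \<in> N"
  shows "(block_edge (graft r J F))\<^sup>*\<^sup>* r v"
proof -
  have root_edge: "block_edge (graft r J F) r j" if "j \<in> J" for j
    using that graft_root by (auto simp: block_edge_def)
  show ?thesis
  proof (cases "v \<in> J")
    case True
    then show ?thesis using root_edge by blast
  next
    case False
    then obtain j where j: "j \<in> J" "v \<in> V j" using disj_familiesD(3)[OF family] v by blast
    have "(block_edge (graft r J F))\<^sup>*\<^sup>* j v"
      using subtree_reach_graft[OF j(1) block_treeD(5)[OF subtree[OF j(1)] j(2)]] .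
    then show ?thesis using root_edge[OF j(1)] by (meson converse_rtranclp_into_rtranclp)
  qed
qed

lemma block_tree_graft: "block_tree r N (graft r J F)"
  unfolding block_tree_def
proof (intro conjI allI impI ballI)
  fix i assume "i \<notin> insert r N"
  then show "graft r J F i = {}"
    unfolding graft_def using subtree_block family_subset root_block(1) by fastforce
next
  fix i K assume "K \<in> graft r J F i"
  then show "K \<noteq> {}" unfolding graft_def using subtree_block root_block(2) by (auto split: if_splits)
next
  fix i K assume "K \<in> graft r J F i"
  then show "K \<subseteq> N"
    unfolding graft_def using subtree_block root_block(1) family_subset by (fastforce split: if_splits)
qed (use graft_blocks_disjoint graft_reach in blast)+

lemma block_weight_graft:
  assumes "finite N"
  shows "block_weight a (graft r J F) = a r J * (\<Prod>j\<in>J. block_weight a (F j))"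
proof -
  have fin_J: "finite J" using root_block assms finite_subset by blast
  have fin: "\<forall>j\<in>J. finite (blocks (F j))"
    using finite_blocks[OF subtree] family_subset assms by (meson finite_Diff finite_subset)
  have disj: "\<forall>j\<in>J. \<forall>j'\<in>J. j \<noteq> j' \<longrightarrow> blocks (F j) \<inter> blocks (F j') = {}"
  proof (intro ballI impI)
    fix j j' assume "j \<in> J" "j' \<in> J" "j \<noteq> j'"
    then have "V j \<inter> V j' = {}" using disj_familiesD(2)[OF family] by blast
    then show "blocks (F j) \<inter> blocks (F j') = {}"
      unfolding blocks_def using \<open>j \<in> J\<close> \<open>j' \<in> J\<close> subtree_block by blast
  qed
  have blocks_graft: "blocks (graft r J F) = insert (r, J) (\<Union>j\<in>J. blocks (F j))"
    unfolding blocks_def graft_def using subtree_at_root by (auto split: if_splits)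
  have "(r, J) \<notin> (\<Union>j\<in>J. blocks (F j))"
    using subtree_at_root by (auto simp: blocks_def)
  then have "block_weight a (graft r J F) = a r J * (\<Prod>(i,K)\<in>(\<Union>j\<in>J. blocks (F j)). a i K)"
    unfolding block_weight_def blocks_graft using fin fin_J by (subst prod.insert) auto
  also have "(\<Prod>(i,K)\<in>(\<Union>j\<in>J. blocks (F j)). a i K) = (\<Prod>j\<in>J. block_weight a (F j))"
    unfolding block_weight_def by (rule prod.UNION_disjoint[OF fin_J fin disj])
  finally show ?thesis .
qed

lemma family_eq_descendants: "j \<in> J \<Longrightarrow> V j = descendants (graft r J F) j - {j}"
proof
  assume j: "j \<in> J"
  show "V j \<subseteq> descendants (graft r J F) j - {j}"
  proof
    fix v assume v: "v \<in> V j"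
    then have "(block_edge (graft r J F))\<^sup>*\<^sup>* j v"
      using subtree_reach_graft[OF j block_treeD(5)[OF subtree[OF j]]] by simp
    moreover have "v \<noteq> j" using v family_subset[OF j] j by blast
    ultimately show "v \<in> descendants (graft r J F) j - {j}" by (simp add: descendants_def)
  qed
  have "u \<in> insert j (V j)" if "u \<in> descendants (graft r J F) j" for u
  proof (rule reach_closed[of "insert j (V j)" _ j u])
    fix u w assume "u \<in> insert j (V j)" "block_edge (graft r J F) u w"
    then obtain K where "K \<in> F j u" "w \<in> K"
      using graft_eq_subtree[OF j] by (auto simp: block_edge_def)
    then show "w \<in> insert j (V j)" using subtree_block[OF j] by blast
  qed (use that in \<open>simp_all add: descendants_def\<close>)
  then show "descendants (graft r J F) j - {j} \<subseteq> V j" by blast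
qed

lemma subtree_eq_restrict: "j \<in> J \<Longrightarrow> F j = restrict_blocks (graft r J F) (insert j (V j))"
  using graft_eq_subtree block_treeD(1)[OF subtree] by (intro ext) (auto simp: restrict_blocks_def)

end

lemma grafting_iff: "grafting r N J V F \<longleftrightarrow> r \<notin> N \<and> (J, V, F) \<in> graft_data N"
  unfolding grafting_def graft_data_def by auto

lemma inj_on_graft:
  assumes "r \<notin> N"
  shows "inj_on (\<lambda>(J, V, F). graft r J F) (graft_data N)"
proof (rule inj_onI)
  fix x y assume "x \<in> graft_data N" "y \<in> graft_data N"
    and "(\<lambda>(J, V, F). graft r J F) x = (\<lambda>(J, V, F). graft r J F) y"
  moreover obtain J V F J' V' F' where xy: "x = (J, V, F)" "y = (J', V', F')"
    by (cases x, cases y) auto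
  ultimately have "(J, V, F) \<in> graft_data N" "(J', V', F') \<in> graft_data N"
    and eq: "graft r J F = graft r J' F'" by auto
  then interpret A: grafting r N J V F + B: grafting r N J' V' F'
    using assms by (auto simp: grafting_iff)
  have J: "J = J'" using A.graft_root B.graft_root eq by simp
  moreover have V: "V = V'"
  proof
    show "V j = V' j" for j
      using A.family_eq_descendants B.family_eq_descendants eq J
        disj_familiesD(1)[OF A.family] disj_familiesD(1)[OF B.family] by (cases "j \<in> J") auto
  qed
  moreover have "F = F'"
  proof
    fix j
    show "F j = F' j"
    proof (cases "j \<in> J")
      case True
      then show ?thesis using A.subtree_eq_restrict B.subtree_eq_restrict eq J V by simp
    next
      case False
      then show ?thesis using A.subtrees B.subtrees J by (auto simp: PiE_def extensional_def)
    qed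
  qed
  ultimately show "x = y" using xy by simp
qed

context
  fixes r N P J
  assumes tree: "block_tree r N P" and root: "r \<notin> N" and root_block: "P r = {J}"
begin

lemma root_edge_iff: "block_edge P r c \<longleftrightarrow> c \<in> J"
  using root_block by (simp add: block_edge_def)

lemma root_block_subset: "J \<subseteq> N" "J \<noteq> {}"
  using block_treeD(2,3)[OF tree, of J r] root_block by auto

lemma descendants_root_block_disjoint:
  "i \<in> J \<Longrightarrow> j \<in> J \<Longrightarrow> i \<noteq> j \<Longrightarrow> descendants P i \<inter> descendants P j = {}"
  using descendants_disjoint[OF tree root] root_edge_iff by blast

lemma disj_families_descendants:
  "(\<lambda>j. if j \<in> J then descendants P j - {j} else {}) \<in> disj_families J (N - J)"
  unfolding disj_families_def
proof (intro CollectI conjI allI impI ballI)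
  fix i j assume "i \<in> J" "j \<in> J" "i \<noteq> j"
  then show "(if i \<in> J then descendants P i - {i} else {}) \<inter> (if j \<in> J then descendants P j - {j} else {}) = {}"
    using descendants_root_block_disjoint by auto
next
  show "(\<Union>j\<in>J. if j \<in> J then descendants P j - {j} else {}) = N - J"
  proof (intro equalityI subsetI)
    fix w assume "w \<in> (\<Union>j\<in>J. if j \<in> J then descendants P j - {j} else {})"
    then obtain j where j: "j \<in> J" "w \<in> descendants P j" "w \<noteq> j" by (auto split: if_splits)
    have "w \<in> N" using descendants_subset[OF tree] j root_block_subset by blast
    moreover have "w \<notin> J" using descendants_root_block_disjoint[of w j] j descendants_self[of w P] by blast
    ultimately show "w \<in> N - J" by simp
  next
    fix w assume "w \<in> N - J"
    then obtain c where "block_edge P r c" "w \<in> descendants P c"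
      using descendants_cover[OF tree root] by blast
    with \<open>w \<in> N - J\<close> show "w \<in> (\<Union>j\<in>J. if j \<in> J then descendants P j - {j} else {})"
      using root_edge_iff by auto
  qed
qed simp

lemma graft_restrict_descendants: "graft r J (\<lambda>j. restrict_blocks P (descendants P j)) = P"
proof
  fix i
  show "graft r J (\<lambda>j. restrict_blocks P (descendants P j)) i = P i"
  proof (cases "i = r")
    case True
    have "i \<notin> descendants P j" if "j \<in> J" for j
      using descendants_subset[OF tree, of j] that root_block_subset True root by blast
    then show ?thesis using True root_block by (auto simp: graft_def restrict_blocks_def)
  next
    case not_root: False
    show ?thesis
    proof (cases "i \<in> N")
      case True
      then obtain c where c: "c \<in> J" "i \<in> descendants P c"
        using descendants_cover[OF tree root] root_edge_iff by blast
      have "restrict_blocks P (descendants P j) i = (if j = c then P i else {})" if "j \<in> J" for j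
        using descendants_root_block_disjoint[of j c] that c by (auto simp: restrict_blocks_def)
      then show ?thesis using c not_root by (auto simp: graft_def)
    next
      case False
      have "i \<notin> descendants P j" if "j \<in> J" for j
        using descendants_subset[OF tree, of j] that root_block_subset False by blast
      moreover have "P i = {}" using block_treeD(1)[OF tree, of i] False not_root by simp
      ultimately show ?thesis using not_root by (simp add: graft_def restrict_blocks_def)
    qed
  qed
qed

end

lemma bij_betw_graft:
  assumes root: "r \<notin> N"
  shows "bij_betw (\<lambda>(J, V, F). graft r J F) (graft_data N) (planted_block_trees r N)"
  unfolding bij_betw_def
proof (intro conjI equalityI subsetI)
  show "inj_on (\<lambda>(J, V, F). graft r J F) (graft_data N)" using inj_on_graft[OF root] .
next
  fix P assume "P \<in> (\<lambda>(J, V, F). graft r J F) ` graft_data N"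
  then obtain J V F where "(J, V, F) \<in> graft_data N" "P = graft r J F" by auto
  then interpret grafting r N J V F using root by (simp add: grafting_iff)
  show "P \<in> planted_block_trees r N"
    using block_tree_graft graft_root \<open>P = graft r J F\<close> by (auto simp: planted_block_trees_def)
next
  fix P assume "P \<in> planted_block_trees r N"
  then obtain J where tree: "block_tree r N P" and J: "P r = {J}"
    by (auto simp: planted_block_trees_def)
  define V where "V = (\<lambda>j. if j \<in> J then descendants P j - {j} else {})"
  define F where "F = restrict (\<lambda>j. restrict_blocks P (descendants P j)) J"
  have "F j \<in> block_trees j (V j)" if "j \<in> J" for j
    using block_tree_restrict_descendants[OF tree root] root_edge_iff[OF tree root J] that
    by (simp add: F_def V_def block_trees_def)
  then have "(J, V, F) \<in> graft_data N"
    using root_block_subset[OF tree root J] disj_families_descendants[OF tree root J]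
    by (auto simp: graft_data_def V_def F_def)
  moreover have "graft r J F = graft r J (\<lambda>j. restrict_blocks P (descendants P j))"
    by (intro ext) (auto simp: F_def graft_def)
  then have "graft r J F = P" using graft_restrict_descendants[OF tree root J] by simp
  ultimately show "P \<in> (\<lambda>(J, V, F). graft r J F) ` graft_data N" by force
qed

lemma sum_planted_block_trees:
  assumes root: "r \<notin> N" and fin: "finite N"
  shows "(\<Sum>P\<in>planted_block_trees r N. block_weight a P) =
    (\<Sum>J | J \<subseteq> N \<and> J \<noteq> {}. a r J *
       (\<Sum>V\<in>disj_families J (N - J). \<Prod>j\<in>J. \<Sum>P\<in>block_trees j (V j). block_weight a P))"
proof -
  have fin_V: "finite (V j)" if "V \<in> disj_families J (N - J)" "j \<in> J" for J V j
    using disj_familiesD(4)[OF that] fin by (meson finite_Diff finite_subset)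
  have fin_J: "finite J" if "J \<subseteq> N" for J using that fin by (rule finite_subset)
  have fin_PiE: "finite (PiE J (\<lambda>j. block_trees j (V j)))"
    if "J \<subseteq> N" "V \<in> disj_families J (N - J)" for J V
    using fin_V[OF that(2)] fin_J[OF that(1)] by (intro finite_PiE finite_block_trees)
  have fin_disj: "finite (disj_families J (N - J))" if "J \<subseteq> N" for J
    using fin fin_J[OF that] by (intro finite_disj_families) auto
  have "(\<Sum>P\<in>planted_block_trees r N. block_weight a P) =
      (\<Sum>(J, V, F)\<in>graft_data N. block_weight a (graft r J F))"
    using sum.reindex_bij_betw[OF bij_betw_graft[OF root], of "block_weight a"]
    by (simp add: split_def)
  also have "\<dots> = (\<Sum>(J, V, F)\<in>graft_data N. a r J * (\<Prod>j\<in>J. block_weight a (F j)))"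
  proof (rule sum.cong[OF refl], clarify)
    fix J V F assume "(J, V, F) \<in> graft_data N"
    then interpret grafting r N J V F using root by (simp add: grafting_iff)
    show "block_weight a (graft r J F) = a r J * (\<Prod>j\<in>J. block_weight a (F j))"
      using block_weight_graft[OF fin] .
  qed
  also have "\<dots> = (\<Sum>J | J \<subseteq> N \<and> J \<noteq> {}.
      \<Sum>(V, F)\<in>(SIGMA V:disj_families J (N - J). PiE J (\<lambda>j. block_trees j (V j))).
        a r J * (\<Prod>j\<in>J. block_weight a (F j)))"
    unfolding graft_data_def
    by (rule sum.Sigma[symmetric]) (use fin fin_disj fin_PiE in \<open>auto intro!: finite_SigmaI\<close>)
  also have "\<dots> = (\<Sum>J | J \<subseteq> N \<and> J \<noteq> {}. \<Sum>V\<in>disj_families J (N - J).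
                  \<Sum>F\<in>PiE J (\<lambda>j. block_trees j (V j)). a r J * (\<Prod>j\<in>J. block_weight a (F j)))"
    by (intro sum.cong refl sum.Sigma[symmetric]) (use fin_disj fin_PiE in auto)
  also have "\<dots> = (\<Sum>J | J \<subseteq> N \<and> J \<noteq> {}. a r J *
       (\<Sum>V\<in>disj_families J (N - J). \<Prod>j\<in>J. \<Sum>P\<in>block_trees j (V j). block_weight a P))"
    using fin_J fin_V
    by (intro sum.cong refl) (simp add: sum_distrib_left prod_sum_PiE finite_block_trees)
  finally show ?thesis .
qed

definition merge :: "nat set set \<Rightarrow> (nat set \<Rightarrow> nat \<Rightarrow> nat set set) \<Rightarrow> nat \<Rightarrow> nat set set" where
  "merge Q G i = (\<Union>N\<in>Q. G N i)"

definition merge_data :: "nat \<Rightarrow> nat set \<Rightarrow> (nat set set \<times> (nat set \<Rightarrow> nat \<Rightarrow> nat set set)) set" where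
  "merge_data r S = (SIGMA Q:{Q. partition_on S Q}. PiE Q (planted_block_trees r))"

definition branch :: "nat \<Rightarrow> (nat \<Rightarrow> nat set set) \<Rightarrow> nat set \<Rightarrow> nat \<Rightarrow> nat set set" where
  "branch r P N i = (if i \<in> N then P i else if i = r then {K \<in> P r. K \<subseteq> N} else {})"

lemma partition_on_eqI: "partition_on S Q \<Longrightarrow> N \<in> Q \<Longrightarrow> N' \<in> Q \<Longrightarrow> N \<inter> N' \<noteq> {} \<Longrightarrow> N = N'"
  unfolding partition_on_def disjoint_def by blast

locale merging =
  fixes r S Q G
  assumes root_notin: "r \<notin> S" and partition: "partition_on S Q"
    and branches: "G \<in> PiE Q (planted_block_trees r)"
begin

lemma branch_tree: "N \<in> Q \<Longrightarrow> block_tree r N (G N)"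
  using branches by (auto simp: planted_block_trees_def)

lemma branch_root_block: "N \<in> Q \<Longrightarrow> \<exists>J. G N r = {J}"
  using branches by (auto simp: planted_block_trees_def PiE_iff)

lemma part_subset: "N \<in> Q \<Longrightarrow> N \<subseteq> S"
  using partition_onD1[OF partition] by blast

lemma branch_block: "N \<in> Q \<Longrightarrow> K \<in> G N i \<Longrightarrow> i \<in> insert r N \<and> K \<subseteq> N \<and> K \<noteq> {}"
  using block_treeD(1,2,3)[OF branch_tree] by blast

lemma merge_eq_branch: "N \<in> Q \<Longrightarrow> i \<in> N \<Longrightarrow> merge Q G i = G N i"
proof -
  assume N: "N \<in> Q" and i: "i \<in> N"
  have "G N' i = {}" if "N' \<in> Q" "N' \<noteq> N" for N'
  proof -
    have "i \<noteq> r" using i part_subset[OF N] root_notin by blast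
    moreover have "i \<notin> N'" using partition_on_eqI[OF partition N that(1)] i that(2) by blast
    ultimately show ?thesis using block_treeD(1)[OF branch_tree[OF that(1)]] by simp
  qed
  then show ?thesis unfolding merge_def using N by auto
qed

lemma merge_closed: "N \<in> Q \<Longrightarrow> u \<in> N \<Longrightarrow> block_edge (merge Q G) u w \<Longrightarrow> w \<in> N"
  using merge_eq_branch branch_block unfolding block_edge_def by blast

lemma branch_reach_merge: "N \<in> Q \<Longrightarrow> (block_edge (G N))\<^sup>*\<^sup>* a v \<Longrightarrow> (block_edge (merge Q G))\<^sup>*\<^sup>* a v"
  by (erule block_edge_rtranclp_mono[rotated]) (auto simp: merge_def)

lemma block_tree_merge: "block_tree r S (merge Q G)"
  unfolding block_tree_def
proof (intro conjI allI impI ballI)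
  fix i assume "i \<notin> insert r S"
  then show "merge Q G i = {}" unfolding merge_def using branch_block part_subset by fastforce
next
  fix i K assume "K \<in> merge Q G i"
  then show "K \<noteq> {}" "K \<subseteq> S" unfolding merge_def using branch_block part_subset by blast+
next
  fix i i' K K' assume K: "K \<in> merge Q G i" and K': "K' \<in> merge Q G i'" and KK: "K \<inter> K' \<noteq> {}"
  obtain N where N: "N \<in> Q" "K \<in> G N i" using K unfolding merge_def by blast
  obtain N' where N': "N' \<in> Q" "K' \<in> G N' i'" using K' unfolding merge_def by blast
  have "N = N'" using partition_on_eqI[OF partition N(1) N'(1)] branch_block[OF N] branch_block[OF N'] KK by blast
  then show "i = i'" "K = K'" using block_treeD(4)[OF branch_tree[OF N(1)]] N N' KK by blast+
next
  fix v assume "v \<in> S"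
  then obtain N where N: "N \<in> Q" "v \<in> N" using partition_onD1[OF partition] by blast
  show "(block_edge (merge Q G))\<^sup>*\<^sup>* r v"
    using branch_reach_merge[OF N(1) block_treeD(5)[OF branch_tree[OF N(1)] N(2)]] .
qed

lemma block_weight_merge:
  assumes "finite S"
  shows "block_weight a (merge Q G) = (\<Prod>N\<in>Q. block_weight a (G N))"
proof -
  have fin_Q: "finite Q" using finite_elements[OF assms partition] .
  have fin: "\<forall>N\<in>Q. finite (blocks (G N))"
    using finite_blocks[OF branch_tree] part_subset assms by (meson finite_subset)
  have disj: "\<forall>N\<in>Q. \<forall>N'\<in>Q. N \<noteq> N' \<longrightarrow> blocks (G N) \<inter> blocks (G N') = {}"
  proof (intro ballI impI)
    fix N N' assume NN': "N \<in> Q" "N' \<in> Q" "N \<noteq> N'"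
    show "blocks (G N) \<inter> blocks (G N') = {}"
    proof (rule ccontr)
      assume "blocks (G N) \<inter> blocks (G N') \<noteq> {}"
      then obtain i K where "K \<in> G N i" "K \<in> G N' i" unfolding blocks_def by blast
      then show False
        using branch_block[OF NN'(1)] branch_block[OF NN'(2)] partition_on_eqI[OF partition NN'(1,2)] NN'(3)
        by blast
    qed
  qed
  have "blocks (merge Q G) = (\<Union>N\<in>Q. blocks (G N))" unfolding blocks_def merge_def by blast
  then show ?thesis unfolding block_weight_def using prod.UNION_disjoint[OF fin_Q fin disj] by simp
qed

lemma branch_merge: "N \<in> Q \<Longrightarrow> G N = branch r (merge Q G) N"
proof
  fix i assume N: "N \<in> Q"
  show "G N i = branch r (merge Q G) N i"
  proof (cases "i \<in> N")
    case True
    then show ?thesis using merge_eq_branch[OF N] by (simp add: branch_def)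
  next
    case not_in: False
    show ?thesis
    proof (cases "i = r")
      case True
      have "G N r = {K \<in> merge Q G r. K \<subseteq> N}"
      proof
        show "G N r \<subseteq> {K \<in> merge Q G r. K \<subseteq> N}" using branch_block[OF N] N unfolding merge_def by blast
        show "{K \<in> merge Q G r. K \<subseteq> N} \<subseteq> G N r"
        proof clarify
          fix K assume K: "K \<in> merge Q G r" "K \<subseteq> N"
          then obtain N' where N': "N' \<in> Q" "K \<in> G N' r" unfolding merge_def by blast
          have "N' = N" using branch_block[OF N'] K(2) partition_on_eqI[OF partition N'(1) N] by blast
          then show "K \<in> G N r" using N' by simp
        qed
      qed
      then show ?thesis using True not_in by (simp add: branch_def)
    next
      case False
      then show ?thesis using not_in block_treeD(1)[OF branch_tree[OF N]] by (simp add: branch_def)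
    qed
  qed
qed

end

lemma merging_iff: "merging r S Q G \<longleftrightarrow> r \<notin> S \<and> (Q, G) \<in> merge_data r S"
  unfolding merging_def merge_data_def by auto

text \<open>A part \<open>N\<close> is the set of vertices reached from the children of its root block.\<close>
lemma merging_part_subset:
  assumes "merging r S Q G" "merging r S Q' G'" and eq: "merge Q G = merge Q' G'"
    and N: "N \<in> Q" and N': "N' \<in> Q'" and same_root_block: "G N r = G' N' r"
  shows "N \<subseteq> N'"
proof
  interpret A: merging r S Q G by fact
  interpret B: merging r S Q' G' by fact
  fix v assume v: "v \<in> N"
  have "(block_edge (G N))\<^sup>*\<^sup>* r v" using block_treeD(5)[OF A.branch_tree[OF N] v] .
  then show "v \<in> N'"
  proof (cases rule: converse_rtranclpE)
    case base
    then show ?thesis using v A.part_subset[OF N] A.root_notin by blast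
  next
    case (step c)
    have c: "c \<in> N'" using step(1) same_root_block B.branch_block[OF N'] unfolding block_edge_def by blast
    have "(block_edge (merge Q' G'))\<^sup>*\<^sup>* c v" using A.branch_reach_merge[OF N step(2)] eq by simp
    then show ?thesis using reach_closed[of N' "merge Q' G'" c v] B.merge_closed[OF N'] c by blast
  qed
qed

lemma merging_parts_subset:
  assumes C1: "merging r S Q1 G1" and C2: "merging r S Q2 G2" and eq: "merge Q1 G1 = merge Q2 G2"
  shows "Q1 \<subseteq> Q2"
proof
  interpret C1: merging r S Q1 G1 by (rule C1)
  interpret C2: merging r S Q2 G2 by (rule C2)
  fix N assume N: "N \<in> Q1"
  obtain J where J: "G1 N r = {J}" using C1.branch_root_block[OF N] by blast
  then have "J \<in> merge Q2 G2 r" using N eq unfolding merge_def by (metis UN_iff singletonI)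
  then obtain N' where N': "N' \<in> Q2" "J \<in> G2 N' r" unfolding merge_def by blast
  have same: "G1 N r = G2 N' r" using J N' C2.branch_root_block[OF N'(1)] by auto
  have "N = N'"
    using merging_part_subset[OF C1 C2 eq N N'(1) same]
      merging_part_subset[OF C2 C1 eq[symmetric] N'(1) N same[symmetric]]
    by blast
  then show "N \<in> Q2" using N' by simp
qed

lemma inj_on_merge:
  assumes root: "r \<notin> S"
  shows "inj_on (\<lambda>(Q, G). merge Q G) (merge_data r S)"
proof (rule inj_onI)
  fix x y assume "x \<in> merge_data r S" "y \<in> merge_data r S"
    and "(\<lambda>(Q, G). merge Q G) x = (\<lambda>(Q, G). merge Q G) y"
  moreover obtain Q G Q' G' where xy: "x = (Q, G)" "y = (Q', G')" by (cases x, cases y) auto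
  ultimately have A: "merging r S Q G" and B: "merging r S Q' G'" and eq: "merge Q G = merge Q' G'"
    using root by (auto simp: merging_iff)
  interpret A: merging r S Q G by (rule A)
  interpret B: merging r S Q' G' by (rule B)
  have Q: "Q = Q'" using merging_parts_subset[OF A B eq] merging_parts_subset[OF B A eq[symmetric]] by blast
  moreover have "G = G'"
  proof
    fix N
    show "G N = G' N"
    proof (cases "N \<in> Q")
      case True
      then show ?thesis using A.branch_merge B.branch_merge eq Q by simp
    next
      case False
      then show ?thesis using A.branches B.branches Q by (auto simp: PiE_def extensional_def)
    qed
  qed
  ultimately show "x = y" using xy by simp
qed

definition block_descendants :: "(nat \<Rightarrow> nat set set) \<Rightarrow> nat set \<Rightarrow> nat set" where
  "block_descendants P K = (\<Union>c\<in>K. descendants P c)"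

lemma subset_block_descendants: "K \<subseteq> block_descendants P K"
  using descendants_self unfolding block_descendants_def by fast

lemma block_descendants_closed:
  "u \<in> block_descendants P K \<Longrightarrow> block_edge P u w \<Longrightarrow> w \<in> block_descendants P K"
  using descendants_closed unfolding block_descendants_def by blast

context
  fixes r S P
  assumes tree: "block_tree r S P" and root: "r \<notin> S"
begin

lemma block_descendants_subset: "K \<in> P r \<Longrightarrow> block_descendants P K \<subseteq> S"
  using descendants_subset[OF tree] block_treeD(3)[OF tree] unfolding block_descendants_def by blast

lemma block_descendants_eqI:
  assumes K: "K \<in> P r" and K': "K' \<in> P r"
    and meet: "block_descendants P K \<inter> block_descendants P K' \<noteq> {}"
  shows "K = K'"
proof -
  obtain c c' where c: "c \<in> K" "c' \<in> K'" "descendants P c \<inter> descendants P c' \<noteq> {}"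
    using meet unfolding block_descendants_def by blast
  then have "c = c'"
    using descendants_disjoint[OF tree root, of c c'] K K' by (auto simp: block_edge_def)
  then show ?thesis using block_treeD(4)[OF tree K K'] c by blast
qed

lemma partition_on_block_descendants: "partition_on S (block_descendants P ` P r)"
proof (rule partition_onI)
  show "\<Union>(block_descendants P ` P r) = S"
  proof (intro equalityI subsetI)
    fix w assume "w \<in> \<Union>(block_descendants P ` P r)"
    then show "w \<in> S" using block_descendants_subset by blast
  next
    fix w assume "w \<in> S"
    then obtain c K where "K \<in> P r" "c \<in> K" "w \<in> descendants P c"
      using descendants_cover[OF tree root] unfolding block_edge_def by blast
    then show "w \<in> \<Union>(block_descendants P ` P r)" unfolding block_descendants_def by blast
  qed
next
  fix p q assume "p \<in> block_descendants P ` P r" "q \<in> block_descendants P ` P r" "p \<noteq> q"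
  then show "disjnt p q" using block_descendants_eqI unfolding disjnt_def by blast
next
  show "{} \<notin> block_descendants P ` P r"
    using subset_block_descendants block_treeD(2)[OF tree] by blast
qed

lemma root_blocks_below:
  assumes K: "K \<in> P r"
  shows "{K' \<in> P r. K' \<subseteq> block_descendants P K} = {K}"
proof (intro equalityI subsetI)
  fix K' assume K': "K' \<in> {K' \<in> P r. K' \<subseteq> block_descendants P K}"
  then have "block_descendants P K' \<inter> block_descendants P K \<noteq> {}"
    using subset_block_descendants[of K' P] block_treeD(2)[OF tree, of K' r] by blast
  then show "K' \<in> {K}" using block_descendants_eqI K K' by blast
qed (use K subset_block_descendants in blast)

lemma branch_planted:
  assumes K: "K \<in> P r"
  shows "branch r P (block_descendants P K) \<in> planted_block_trees r (block_descendants P K)"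
proof -
  let ?N = "block_descendants P K"
  have root_N: "r \<notin> ?N" using block_descendants_subset[OF K] root by blast
  have branch: "branch r P ?N = (\<lambda>i. if i \<in> ?N then P i else if i = r then {K} else {})"
    using root_blocks_below[OF K] by (intro ext) (simp add: branch_def)
  have "block_tree r ?N (branch r P ?N)"
    unfolding block_tree_def branch
  proof (intro conjI allI impI ballI)
    fix i K' assume "K' \<in> (if i \<in> ?N then P i else if i = r then {K} else {})"
    then show "K' \<subseteq> ?N"
      using block_descendants_closed[of i P K] subset_block_descendants[of K P]
      by (auto simp: block_edge_def split: if_splits)
  next
    fix i i' K1 K2
    assume "K1 \<in> (if i \<in> ?N then P i else if i = r then {K} else {})"
      and "K2 \<in> (if i' \<in> ?N then P i' else if i' = r then {K} else {})" and "K1 \<inter> K2 \<noteq> {}"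
    then have "K1 \<in> P i" "K2 \<in> P i'" "K1 \<inter> K2 \<noteq> {}" using K by (auto split: if_splits)
    then show "i = i'" "K1 = K2" using block_treeD(4)[OF tree] by blast+
  next
    fix w assume "w \<in> ?N"
    then obtain c where c: "c \<in> K" "(block_edge P)\<^sup>*\<^sup>* c w"
      unfolding block_descendants_def descendants_def by blast
    have "(block_edge (\<lambda>i. if i \<in> ?N then P i else if i = r then {K} else {}))\<^sup>*\<^sup>* c w"
    proof (rule reach_restrict[of ?N P _ c w])
      show "\<And>u w. u \<in> ?N \<Longrightarrow> block_edge P u w \<Longrightarrow> w \<in> ?N" by (rule block_descendants_closed)
    qed (use c subset_block_descendants[of K P] in auto)
    moreover have "block_edge (\<lambda>i. if i \<in> ?N then P i else if i = r then {K} else {}) r c"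
      using root_N c(1) by (simp add: block_edge_def)
    ultimately show "(block_edge (\<lambda>i. if i \<in> ?N then P i else if i = r then {K} else {}))\<^sup>*\<^sup>* r w"
      by (meson converse_rtranclp_into_rtranclp)
  qed (use block_treeD(2)[OF tree] K in \<open>auto split: if_splits\<close>)
  then show ?thesis using root_N by (auto simp: planted_block_trees_def branch)
qed

lemma merge_branches: "merge (block_descendants P ` P r) (branch r P) = P"
proof
  fix i
  show "merge (block_descendants P ` P r) (branch r P) i = P i"
  proof (cases "i \<in> S")
    case True
    then obtain N where N: "N \<in> block_descendants P ` P r" "i \<in> N"
      using partition_onD1[OF partition_on_block_descendants] by blast
    have "branch r P N' i = (if N' = N then P i else {})" if "N' \<in> block_descendants P ` P r" for N'
      using partition_on_eqI[OF partition_on_block_descendants N(1) that] N True root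
      by (auto simp: branch_def)
    then show ?thesis using N unfolding merge_def by auto
  next
    case not_in: False
    show ?thesis
    proof (cases "i = r")
      case True
      have "(\<Union>N\<in>block_descendants P ` P r. branch r P N r) = P r"
      proof (intro equalityI subsetI)
        fix K assume "K \<in> (\<Union>N\<in>block_descendants P ` P r. branch r P N r)"
        then obtain N where "N \<subseteq> S" "K \<in> branch r P N r" using block_descendants_subset by blast
        then show "K \<in> P r" using root by (auto simp: branch_def split: if_splits)
      next
        fix K assume K: "K \<in> P r"
        then have "K \<in> branch r P (block_descendants P K) r"
          using root_blocks_below[OF K] block_descendants_subset[OF K] root by (auto simp: branch_def)
        then show "K \<in> (\<Union>N\<in>block_descendants P ` P r. branch r P N r)" using K by blast
      qed
      then show ?thesis using True unfolding merge_def by simp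
    next
      case False
      then show ?thesis
        using not_in block_treeD(1)[OF tree, of i] block_descendants_subset
        unfolding merge_def branch_def by auto
    qed
  qed
qed

end

lemma bij_betw_merge:
  assumes root: "r \<notin> S"
  shows "bij_betw (\<lambda>(Q, G). merge Q G) (merge_data r S) (block_trees r S)"
  unfolding bij_betw_def
proof (intro conjI equalityI subsetI)
  show "inj_on (\<lambda>(Q, G). merge Q G) (merge_data r S)" using inj_on_merge[OF root] .
next
  fix P assume "P \<in> (\<lambda>(Q, G). merge Q G) ` merge_data r S"
  then obtain Q G where "(Q, G) \<in> merge_data r S" "P = merge Q G" by auto
  then interpret merging r S Q G using root by (simp add: merging_iff)
  show "P \<in> block_trees r S" using block_tree_merge \<open>P = merge Q G\<close> by (simp add: block_trees_def)
next
  fix P assume "P \<in> block_trees r S"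
  then have tree: "block_tree r S P" by (simp add: block_trees_def)
  let ?Q = "block_descendants P ` P r"
  have "(?Q, restrict (branch r P) ?Q) \<in> merge_data r S"
    using partition_on_block_descendants[OF tree root] branch_planted[OF tree root]
    by (auto simp: merge_data_def)
  moreover have "merge ?Q (restrict (branch r P) ?Q) = merge ?Q (branch r P)"
    by (intro ext) (auto simp: merge_def)
  then have "merge ?Q (restrict (branch r P) ?Q) = P" using merge_branches[OF tree root] by simp
  ultimately show "P \<in> (\<lambda>(Q, G). merge Q G) ` merge_data r S" by force
qed

lemma sum_block_trees:
  assumes root: "r \<notin> S" and fin: "finite S"
  shows "(\<Sum>P\<in>block_trees r S. block_weight a P) =
    (\<Sum>Q | partition_on S Q. \<Prod>N\<in>Q. \<Sum>P\<in>planted_block_trees r N. block_weight a P)"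
proof -
  have fin_Q: "finite Q" if "partition_on S Q" for Q using finite_elements[OF fin that] .
  have fin_N: "finite N" if "partition_on S Q" "N \<in> Q" for Q N
    using that fin partition_onD1 by (metis Union_upper finite_subset)
  have "(\<Sum>P\<in>block_trees r S. block_weight a P) = (\<Sum>(Q, G)\<in>merge_data r S. block_weight a (merge Q G))"
    using sum.reindex_bij_betw[OF bij_betw_merge[OF root], of "block_weight a"]
    by (simp add: split_def)
  also have "\<dots> = (\<Sum>(Q, G)\<in>merge_data r S. \<Prod>N\<in>Q. block_weight a (G N))"
  proof (rule sum.cong[OF refl], clarify)
    fix Q G assume "(Q, G) \<in> merge_data r S"
    then interpret merging r S Q G using root by (simp add: merging_iff)
    show "block_weight a (merge Q G) = (\<Prod>N\<in>Q. block_weight a (G N))"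
      using block_weight_merge[OF fin] .
  qed
  also have "\<dots> = (\<Sum>Q | partition_on S Q. \<Sum>G\<in>PiE Q (planted_block_trees r). \<Prod>N\<in>Q. block_weight a (G N))"
    unfolding merge_data_def
    by (rule sum.Sigma[symmetric])
       (use fin fin_Q fin_N in \<open>auto intro!: finite_PiE finite_planted_block_trees finitely_many_partition_on\<close>)
  also have "\<dots> = (\<Sum>Q | partition_on S Q. \<Prod>N\<in>Q. \<Sum>P\<in>planted_block_trees r N. block_weight a P)"
    using fin_Q fin_N by (intro sum.cong refl) (simp add: prod_sum_PiE finite_planted_block_trees)
  finally show ?thesis .
qed

lemma mset_sorted_list_of_set: "mset (sorted_list_of_set A) = mset_set A"
  by (metis mset_sorted_list_of_multiset sorted_list_of_mset_set)

lemma mset_args_image: "inj_on h J \<Longrightarrow> mset (args (y \<circ> h) J) = mset (args y (h ` J))"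
  by (simp add: args_def mset_sorted_list_of_set image_mset_mset_set[symmetric] multiset.map_comp)

lemma args_cong: "finite K \<Longrightarrow> (\<And>i. i \<in> K \<Longrightarrow> y i = y' i) \<Longrightarrow> args y K = args y' K"
  unfolding args_def by (rule map_cong) auto

lemma Bfun_cong:
  assumes fin: "finite N" and eq: "\<And>i. i \<in> N \<Longrightarrow> y i = y' i"
  shows "Bfun A t q y N = Bfun A t q y' N"
  unfolding Bfun_def
proof (intro sum.cong refl arg_cong2[where f = "(*)"] prod.cong)
  fix J assume J: "J \<in> {J. J \<subseteq> N \<and> J \<noteq> {}}"
  then show "A q (args y J) = A q (args y' J)"
    using eq fin by (subst args_cong[of J y y']) (auto intro: finite_subset)
  fix V j assume V: "V \<in> disj_families J (N - J)" and j: "j \<in> J"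
  have "V j \<subseteq> N" using disj_familiesD(4)[OF V j] by blast
  then have "args y (V j) = args y' (V j)" using eq fin by (intro args_cong) (auto intro: finite_subset)
  moreover have "y j = y' j" using j J eq by blast
  ultimately show "tz t (y j) y (V j) = tz t (y' j) y' (V j)" by (simp add: tz_def)
qed

locale family_reindexing =
  fixes h :: "nat \<Rightarrow> nat" and N J :: "nat set"
  assumes inj: "inj_on h N" and J_subset: "J \<subseteq> N"
begin

definition push_family :: "(nat \<Rightarrow> nat set) \<Rightarrow> nat \<Rightarrow> nat set" where
  "push_family V k = (if k \<in> h ` J then h ` V (the_inv_into N h k) else {})"

definition pull_family :: "(nat \<Rightarrow> nat set) \<Rightarrow> nat \<Rightarrow> nat set" where
  "pull_family W j = (if j \<in> J then the_inv_into N h ` W (h j) else {})"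

abbreviation "g \<equiv> the_inv_into N h"

lemma g_h: "x \<in> N \<Longrightarrow> g (h x) = x"
  using the_inv_into_f_f[OF inj] .

lemma h_g: "k \<in> h ` N \<Longrightarrow> h (g k) = k"
  using f_the_inv_into_f[OF inj] .

lemma push_family_image: "j \<in> J \<Longrightarrow> push_family V (h j) = h ` V j"
  using J_subset g_h[of j] by (auto simp: push_family_def)

lemma push_family_disj_families:
  assumes V: "V \<in> disj_families J (N - J)"
  shows "push_family V \<in> disj_families (h ` J) (h ` N - h ` J)"
  unfolding disj_families_def
proof (intro CollectI conjI allI impI ballI)
  fix k1 k2 assume k: "k1 \<in> h ` J" "k2 \<in> h ` J" "k1 \<noteq> k2"
  then obtain j1 j2 where j: "j1 \<in> J" "j2 \<in> J" "k1 = h j1" "k2 = h j2" "j1 \<noteq> j2" by blast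
  moreover have "V j1 \<subseteq> N" "V j2 \<subseteq> N" using disj_familiesD(4)[OF V] j(1,2) by blast+
  ultimately have "h ` V j1 \<inter> h ` V j2 = {}"
    using disj_familiesD(2)[OF V j(1,2) j(5)] inj_on_image_Int[OF inj, of "V j1" "V j2"] by simp
  then show "push_family V k1 \<inter> push_family V k2 = {}" using j push_family_image by simp
next
  have "(\<Union>k\<in>h ` J. push_family V k) = (\<Union>j\<in>J. push_family V (h j))" by (simp add: image_image)
  also have "\<dots> = (\<Union>j\<in>J. h ` V j)" by (rule SUP_cong[OF refl]) (rule push_family_image)
  also have "\<dots> = h ` (N - J)" using disj_familiesD(3)[OF V] by blast
  also have "\<dots> = h ` N - h ` J" using inj J_subset by (simp add: inj_on_image_set_diff)
  finally show "(\<Union>k\<in>h ` J. push_family V k) = h ` N - h ` J" .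
qed (simp add: push_family_def)

lemma pull_family_disj_families:
  assumes W: "W \<in> disj_families (h ` J) (h ` N - h ` J)"
  shows "pull_family W \<in> disj_families J (N - J)"
  unfolding disj_families_def
proof (intro CollectI conjI allI impI ballI)
  have inj_g: "inj_on g (h ` N)" using inj by (rule inj_on_the_inv_into)
  fix j1 j2 assume j: "j1 \<in> J" "j2 \<in> J" "j1 \<noteq> j2"
  then have "h j1 \<noteq> h j2" using inj J_subset by (meson inj_onD subsetD)
  then have "W (h j1) \<inter> W (h j2) = {}" using disj_familiesD(2)[OF W] j by blast
  then have "g ` W (h j1) \<inter> g ` W (h j2) = {}"
    using disj_familiesD(4)[OF W] j inj_on_image_Int[OF inj_g, of "W (h j1)" "W (h j2)"] by auto
  then show "pull_family W j1 \<inter> pull_family W j2 = {}" using j by (simp add: pull_family_def)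
next
  have "(\<Union>j\<in>J. pull_family W j) = g ` (\<Union>k\<in>h ` J. W k)" by (auto simp: pull_family_def)
  also have "\<dots> = g ` h ` (N - J)"
    using disj_familiesD(3)[OF W] inj J_subset by (simp add: inj_on_image_set_diff)
  also have "\<dots> = N - J" using g_h by (force simp: image_image)
  finally show "(\<Union>j\<in>J. pull_family W j) = N - J" .
qed (simp add: pull_family_def)

lemma pull_push_family:
  assumes V: "V \<in> disj_families J (N - J)"
  shows "pull_family (push_family V) = V"
proof
  fix j show "pull_family (push_family V) j = V j"
  proof (cases "j \<in> J")
    case True
    have "V j \<subseteq> N" using disj_familiesD(4)[OF V True] by blast
    then show ?thesis using True push_family_image g_h by (force simp: pull_family_def image_image)
  qed (simp add: pull_family_def disj_familiesD(1)[OF V])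
qed

lemma push_pull_family:
  assumes W: "W \<in> disj_families (h ` J) (h ` N - h ` J)"
  shows "push_family (pull_family W) = W"
proof
  fix k show "push_family (pull_family W) k = W k"
  proof (cases "k \<in> h ` J")
    case True
    then have "g k \<in> J" "h (g k) = k" using g_h h_g J_subset by auto
    moreover have "W k \<subseteq> h ` N" using disj_familiesD(4)[OF W True] by blast
    ultimately show ?thesis using True h_g by (force simp: pull_family_def push_family_def image_image)
  qed (simp add: push_family_def disj_familiesD(1)[OF W])
qed

lemma sum_disj_families_push:
  "(\<Sum>W\<in>disj_families (h ` J) (h ` N - h ` J). G W) = (\<Sum>V\<in>disj_families J (N - J). G (push_family V))"
  by (rule sum.reindex_bij_witness[where i = push_family and j = pull_family])
     (simp_all add: push_family_disj_families pull_family_disj_families push_pull_family pull_push_family)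

end

lemma partition_on_image:
  assumes P: "partition_on A P" and inj: "inj_on h A"
  shows "partition_on (h ` A) (image h ` P)"
proof -
  have "(`) h ` P - {{}} = image h ` P" using partition_onD3[OF P] by auto
  then show ?thesis using partition_on_inj_image[OF P inj] by simp
qed

lemma sum_partition_on_reindex:
  assumes bij: "bij_betw h A B"
  shows "(\<Sum>P | partition_on A P. F (image h ` P)) = (\<Sum>Q | partition_on B Q. F Q)"
proof -
  have inj: "inj_on h A" and hA: "h ` A = B" using bij by (auto simp: bij_betw_def)
  define g where "g = the_inv_into A h"
  have injg: "inj_on g B" and gB: "g ` B = A"
    using bij_betw_the_inv_into[OF bij] by (auto simp: bij_betw_def g_def)
  have hg: "y \<in> B \<Longrightarrow> h (g y) = y" for y unfolding g_def using f_the_inv_into_f[OF inj] hA by blast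
  have inj2: "inj_on (image (image h)) {P. partition_on A P}"
    by (rule inj_on_subset[OF inj_on_image_Pow[OF inj_on_image_Pow[OF inj]]])
       (auto simp: partition_on_def)
  have "image (image h) ` {P. partition_on A P} = {Q. partition_on B Q}"
  proof (intro equalityI subsetI)
    fix Q assume "Q \<in> image (image h) ` {P. partition_on A P}"
    then show "Q \<in> {Q. partition_on B Q}" using partition_on_image inj hA by blast
  next
    fix Q assume "Q \<in> {Q. partition_on B Q}"
    then have Q: "partition_on B Q" by simp
    have "image h ` image g ` Q = Q"
    proof -
      have "h ` g ` X = X" if "X \<in> Q" for X
      proof -
        have "h ` g ` X = (\<lambda>x. h (g x)) ` X" by (simp only: image_image)
        also have "\<dots> = (\<lambda>x. x) ` X"
          by (rule image_cong[OF refl]) (use hg that partition_onD1[OF Q] in blast)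
        finally show ?thesis by simp
      qed
      then show ?thesis by (simp add: image_image)
    qed
    moreover have "partition_on A (image g ` Q)" using partition_on_image[OF Q injg] gB by simp
    ultimately show "Q \<in> image (image h) ` {P. partition_on A P}" by (metis image_eqI mem_Collect_eq)
  qed
  then show ?thesis using sum.reindex[OF inj2, of F] by (simp add: comp_def)
qed

lemma bij_betw_sorted_list_of_set_nth:
  assumes "finite S"
  shows "bij_betw (\<lambda>i. sorted_list_of_set S ! (i - 1)) {1..card S} S"
proof -
  have "bij_betw (\<lambda>i. i - 1) {1..card S} {..<card S}" by (rule bij_betw_byWitness[where f' = Suc]) auto
  moreover have "bij_betw ((!) (sorted_list_of_set S)) {..<card S} S"
    using assms by (intro bij_betw_nth) auto
  ultimately show ?thesis using bij_betw_trans by (simp add: comp_def) blast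
qed

locale symmetric_fixed_point =
  fixes A t :: "'a \<Rightarrow> 'a list \<Rightarrow> complex"
  assumes symA: "\<forall>q xs ys. mset xs = mset ys \<longrightarrow> A q xs = A q ys"
    and symt: "\<forall>q xs ys. mset xs = mset ys \<longrightarrow> t q xs = t q ys"
    and FP: "\<forall>q xs. xs \<noteq> [] \<longrightarrow> t q xs = FP_rhs A t q xs"
begin

lemma A_args_image: "inj_on h J \<Longrightarrow> A q (args y (h ` J)) = A q (args (y \<circ> h) J)"
  using symA mset_args_image by metis

lemma tz_image: "inj_on h U \<Longrightarrow> tz t p y (h ` U) = tz t p (y \<circ> h) U"
  by (simp add: tz_def symt[rule_format, OF mset_args_image[symmetric]])

lemma sum_disj_families_tz_image:
  assumes inj: "inj_on h N" and J: "J \<subseteq> N"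
  shows "(\<Sum>W\<in>disj_families (h ` J) (h ` N - h ` J). \<Prod>k\<in>h ` J. tz t (y k) y (W k)) =
    (\<Sum>V\<in>disj_families J (N - J). \<Prod>j\<in>J. tz t ((y \<circ> h) j) (y \<circ> h) (V j))"
proof -
  interpret family_reindexing h N J using inj J by unfold_locales
  have "(\<Prod>k\<in>h ` J. tz t (y k) y (push_family V k)) = (\<Prod>j\<in>J. tz t ((y \<circ> h) j) (y \<circ> h) (V j))"
    if V: "V \<in> disj_families J (N - J)" for V
  proof -
    have "(\<Prod>k\<in>h ` J. tz t (y k) y (push_family V k)) = (\<Prod>j\<in>J. tz t (y (h j)) y (h ` V j))"
      using inj_on_subset[OF inj J] by (simp add: prod.reindex push_family_image)
    also have "\<dots> = (\<Prod>j\<in>J. tz t ((y \<circ> h) j) (y \<circ> h) (V j))"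
    proof (rule prod.cong[OF refl])
      fix j assume "j \<in> J"
      then have "V j \<subseteq> N" using disj_familiesD(4)[OF V] by blast
      then show "tz t (y (h j)) y (h ` V j) = tz t ((y \<circ> h) j) (y \<circ> h) (V j)"
        using tz_image[OF inj_on_subset[OF inj]] by simp
    qed
    finally show ?thesis .
  qed
  then show ?thesis unfolding sum_disj_families_push by (rule sum.cong[OF refl])
qed

lemma Bfun_image:
  assumes inj: "inj_on h N"
  shows "Bfun A t q (y \<circ> h) N = Bfun A t q y (h ` N)"
proof -
  have inj_image: "inj_on (image h) {J. J \<subseteq> N \<and> J \<noteq> {}}"
    using inj_on_image_Pow[OF inj] by (rule inj_on_subset) auto
  have "image h ` {J. J \<subseteq> N \<and> J \<noteq> {}} = {J'. J' \<subseteq> h ` N \<and> J' \<noteq> {}}"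
    by (auto simp: subset_image_iff)
  then have "Bfun A t q y (h ` N) = (\<Sum>J | J \<subseteq> N \<and> J \<noteq> {}. A q (args y (h ` J)) *
      (\<Sum>W\<in>disj_families (h ` J) (h ` N - h ` J). \<Prod>k\<in>h ` J. tz t (y k) y (W k)))"
    unfolding Bfun_def using sum.reindex[OF inj_image] by simp
  also have "\<dots> = Bfun A t q (y \<circ> h) N"
    unfolding Bfun_def
    using A_args_image[OF inj_on_subset[OF inj]] sum_disj_families_tz_image[OF inj]
    by (intro sum.cong refl) simp
  finally show ?thesis by (rule sym)
qed

lemma fixed_point_on_finite_set:
  assumes fin: "finite S" and ne: "S \<noteq> {}"
  shows "t q (args y S) = (\<Sum>Q | partition_on S Q. \<Prod>N\<in>Q. Bfun A t q y N)"
proof -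
  define h where "h i = sorted_list_of_set S ! (i - 1)" for i
  define m where "m = card S"
  have bij: "bij_betw h {1..m} S"
    unfolding h_def m_def using bij_betw_sorted_list_of_set_nth[OF fin] .
  have inj: "inj_on h {1..m}" using bij by (rule bij_betw_imp_inj_on)
  have nth: "(q # args y S) ! i = (y \<circ> h) i" if "i \<in> {1..m}" for i
    using that by (cases i) (auto simp: args_def h_def m_def)
  have len: "length (args y S) = m" by (simp add: args_def m_def)
  then have "args y S \<noteq> []" using fin ne by (auto simp: m_def)
  then have "t q (args y S) = (\<Sum>P | partition_on {1..m} P. \<Prod>J\<in>P. Bfun A t q (\<lambda>i. (q # args y S) ! i) J)"
    using FP by (simp add: FP_rhs_def len)
  also have "\<dots> = (\<Sum>P | partition_on {1..m} P. \<Prod>N\<in>image h ` P. Bfun A t q y N)"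
  proof (rule sum.cong[OF refl])
    fix P assume "P \<in> {P. partition_on {1..m} P}"
    then have sub: "J \<subseteq> {1..m}" if "J \<in> P" for J using that partition_onD1 by blast
    have "Bfun A t q (\<lambda>i. (q # args y S) ! i) J = Bfun A t q y (h ` J)" if J: "J \<in> P" for J
    proof -
      have fin_J: "finite J" using sub[OF J] finite_subset by blast
      have "Bfun A t q (\<lambda>i. (q # args y S) ! i) J = Bfun A t q (y \<circ> h) J"
        using nth sub[OF J] by (intro Bfun_cong[OF fin_J]) auto
      also have "\<dots> = Bfun A t q y (h ` J)" using Bfun_image[OF inj_on_subset[OF inj sub[OF J]]] .
      finally show ?thesis .
    qed
    moreover have "inj_on (image h) P"
      using inj_on_image_Pow[OF inj] by (rule inj_on_subset) (use sub in auto)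
    ultimately show "(\<Prod>J\<in>P. Bfun A t q (\<lambda>i. (q # args y S) ! i) J) = (\<Prod>N\<in>image h ` P. Bfun A t q y N)"
      by (simp add: prod.reindex)
  qed
  also have "\<dots> = (\<Sum>Q | partition_on S Q. \<Prod>N\<in>Q. Bfun A t q y N)"
    using sum_partition_on_reindex[OF bij, of "\<lambda>Q. \<Prod>N\<in>Q. Bfun A t q y N"] .
  finally show ?thesis .
qed

lemma Bfun_eq_sum_planted_block_trees:
  assumes fin: "finite N" and root: "r \<notin> N"
    and smaller: "\<And>j U. j \<in> N \<Longrightarrow> U \<subseteq> N - {j} \<Longrightarrow>
      tz t (y j) y U = (\<Sum>P\<in>block_trees j U. block_weight (\<lambda>i J. A (y i) (args y J)) P)"
  shows "Bfun A t (y r) y N = (\<Sum>P\<in>planted_block_trees r N. block_weight (\<lambda>i J. A (y i) (args y J)) P)"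
proof -
  have "tz t (y j) y (V j) = (\<Sum>P\<in>block_trees j (V j). block_weight (\<lambda>i J. A (y i) (args y J)) P)"
    if "J \<subseteq> N" "V \<in> disj_families J (N - J)" "j \<in> J" for J V j
    using that disj_familiesD(4)[OF that(2,3)] by (intro smaller) auto
  then have "Bfun A t (y r) y N = (\<Sum>J | J \<subseteq> N \<and> J \<noteq> {}. A (y r) (args y J) *
      (\<Sum>V\<in>disj_families J (N - J). \<Prod>j\<in>J. \<Sum>P\<in>block_trees j (V j). block_weight (\<lambda>i J. A (y i) (args y J)) P))"
    unfolding Bfun_def by (intro sum.cong refl arg_cong2[where f = "(*)"] prod.cong) auto
  also have "\<dots> = (\<Sum>P\<in>planted_block_trees r N. block_weight (\<lambda>i J. A (y i) (args y J)) P)"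
    by (rule sum_planted_block_trees[OF root fin, symmetric])
  finally show ?thesis .
qed

lemma tz_eq_sum_block_trees:
  assumes "finite S" "r \<notin> S"
  shows "tz t (y r) y S = (\<Sum>P\<in>block_trees r S. block_weight (\<lambda>i J. A (y i) (args y J)) P)"
  using assms
proof (induction "card S" arbitrary: S r rule: less_induct)
  case less
  show ?case
  proof (cases "S = {}")
    case True
    then show ?thesis by (simp add: tz_def block_trees_empty block_weight_empty)
  next
    case False
    have "tz t (y r) y S = (\<Sum>Q | partition_on S Q. \<Prod>N\<in>Q. Bfun A t (y r) y N)"
      using fixed_point_on_finite_set[OF less.prems(1) False] by (simp add: tz_def False)
    also have "\<dots> = (\<Sum>Q | partition_on S Q. \<Prod>N\<in>Q.
        \<Sum>P\<in>planted_block_trees r N. block_weight (\<lambda>i J. A (y i) (args y J)) P)"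
    proof (intro sum.cong[OF refl] prod.cong[OF refl])
      fix Q N assume "Q \<in> {Q. partition_on S Q}" "N \<in> Q"
      then have N: "N \<subseteq> S" using partition_onD1 by blast
      show "Bfun A t (y r) y N = (\<Sum>P\<in>planted_block_trees r N. block_weight (\<lambda>i J. A (y i) (args y J)) P)"
      proof (rule Bfun_eq_sum_planted_block_trees)
        fix j U assume "j \<in> N" "U \<subseteq> N - {j}"
        then have "U \<subset> S" and "j \<notin> U" using N by blast+
        then show "tz t (y j) y U = (\<Sum>P\<in>block_trees j U. block_weight (\<lambda>i J. A (y i) (args y J)) P)"
          using less.hyps psubset_card_mono[OF less.prems(1)] less.prems(1) finite_subset by blast
      qed (use N less.prems finite_subset in blast)+
    qed
    also have "\<dots> = (\<Sum>P\<in>block_trees r S. block_weight (\<lambda>i J. A (y i) (args y J)) P)"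
      by (rule sum_block_trees[OF less.prems(2,1), symmetric])
    finally show ?thesis .
  qed
qed

end

lemma enriched_treesD:
  assumes "(par, P) \<in> enriched_trees n"
  shows "\<And>i. i \<in> {1..n} \<Longrightarrow> par i \<in> {0..n}"
    and "\<And>i. i \<in> {1..n} \<Longrightarrow> \<exists>k. (par ^^ k) i = 0"
    and "\<And>j. j \<notin> {1..n} \<Longrightarrow> par j = 0"
    and "\<And>i. i \<in> {0..n} \<Longrightarrow> partition_on (children n par i) (P i)"
    and "\<And>i. i \<notin> {0..n} \<Longrightarrow> P i = {}"
  using assms unfolding enriched_trees_def rooted_trees_def by auto

lemma enriched_trees_block:
  assumes E: "(par, P) \<in> enriched_trees n" and J: "J \<in> P i"
  shows "i \<in> {0..n}" "J \<noteq> {}" "J \<subseteq> children n par i"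
proof -
  show i: "i \<in> {0..n}" using enriched_treesD(5)[OF E, of i] J by (metis empty_iff)
  show "J \<noteq> {}" using partition_onD3[OF enriched_treesD(4)[OF E i]] J by blast
  show "J \<subseteq> children n par i" using partition_onD1[OF enriched_treesD(4)[OF E i]] J by blast
qed

lemma enriched_trees_parent_edge:
  assumes E: "(par, P) \<in> enriched_trees n" and u: "u \<in> {1..n}"
  shows "block_edge P (par u) u"
proof -
  have "u \<in> children n par (par u)" using u by (simp add: children_def)
  then have "u \<in> \<Union>(P (par u))"
    using partition_onD1[OF enriched_treesD(4)[OF E enriched_treesD(1)[OF E u]]] by blast
  then show ?thesis by (auto simp: block_edge_def)
qed

lemma enriched_trees_reach:
  assumes E: "(par, P) \<in> enriched_trees n"
  shows "i \<in> {0..n} \<Longrightarrow> (par ^^ k) i = 0 \<Longrightarrow> (block_edge P)\<^sup>*\<^sup>* 0 i"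
proof (induction k arbitrary: i)
  case (Suc k)
  show ?case
  proof (cases "i = 0")
    case False
    then have i: "i \<in> {1..n}" using Suc.prems by auto
    have "(par ^^ k) (par i) = 0" using Suc.prems by (simp only: funpow_Suc_right comp_def)
    then have "(block_edge P)\<^sup>*\<^sup>* 0 (par i)" using Suc.IH enriched_treesD(1)[OF E i] by blast
    then show ?thesis using enriched_trees_parent_edge[OF E i] by (rule rtranclp.rtrancl_into_rtrancl)
  qed simp
qed simp

lemma enriched_tree_block_tree:
  assumes E: "(par, P) \<in> enriched_trees n"
  shows "block_tree 0 {1..n} P"
  unfolding block_tree_def
proof (intro conjI allI impI ballI)
  fix i assume "i \<notin> insert 0 {1..n}"
  then show "P i = {}" using enriched_treesD(5)[OF E, of i] by auto
next
  fix i J assume "J \<in> P i"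
  then show "J \<noteq> {}" "J \<subseteq> {1..n}" using enriched_trees_block[OF E] by (force simp: children_def)+
next
  fix i i' J J' assume J: "J \<in> P i" and J': "J' \<in> P i'" and meet: "J \<inter> J' \<noteq> {}"
  then obtain v where "v \<in> J" "v \<in> J'" by blast
  then have "par v = i" "par v = i'"
    using enriched_trees_block(3)[OF E J] enriched_trees_block(3)[OF E J'] by (auto simp: children_def)
  then show "i = i'" by simp
  then show "J = J'"
    using partition_on_eqI[OF enriched_treesD(4)[OF E enriched_trees_block(1)[OF E J]] J] J' meet by blast
next
  fix v assume "v \<in> {1..n}"
  then show "(block_edge P)\<^sup>*\<^sup>* 0 v" using enriched_treesD(2)[OF E] enriched_trees_reach[OF E] by fastforce
qed

definition block_parent :: "(nat \<Rightarrow> nat set set) \<Rightarrow> nat \<Rightarrow> nat \<Rightarrow> nat" where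
  "block_parent P n j = (if j \<in> {1..n} then THE i. block_edge P i j else 0)"

context
  fixes n P
  assumes tree: "block_tree 0 {1..n} P"
begin

lemma block_parent_edge:
  assumes j: "j \<in> {1..n}"
  shows "block_edge P (block_parent P n j) j"
proof -
  have "(block_edge P)\<^sup>*\<^sup>* 0 j" using block_treeD(5)[OF tree j] .
  then have "\<exists>i. block_edge P i j" using j by (cases rule: rtranclp.cases) auto
  then have "\<exists>!i. block_edge P i j" using block_tree_parent_unique[OF tree] by blast
  then have "block_edge P (THE i. block_edge P i j) j" by (rule theI')
  then show ?thesis using j by (simp add: block_parent_def)
qed

lemma block_parent_eqI:
  assumes e: "block_edge P i j"
  shows "block_parent P n j = i"
proof -
  have "j \<in> {1..n}" using block_tree_edge_in[OF tree e] by simp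
  then show ?thesis using block_tree_parent_unique[OF tree block_parent_edge e] by simp
qed

lemma children_block_parent: "children n (block_parent P n) i = \<Union>(P i)"
proof (intro equalityI subsetI)
  fix j assume "j \<in> children n (block_parent P n) i"
  then show "j \<in> \<Union>(P i)" using block_parent_edge by (auto simp: children_def block_edge_def)
next
  fix j assume "j \<in> \<Union>(P i)"
  then have "block_edge P i j" by (auto simp: block_edge_def)
  then show "j \<in> children n (block_parent P n) i"
    using block_parent_eqI block_tree_edge_in[OF tree] by (simp add: children_def)
qed

lemma block_parent_rooted_tree: "block_parent P n \<in> rooted_trees n"
proof -
  have reach: "\<exists>k. (block_parent P n ^^ k) w = 0" if "(block_edge P)\<^sup>*\<^sup>* 0 w" for w
    using that
  proof (induction rule: rtranclp_induct)
    case base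
    have "(block_parent P n ^^ 0) 0 = 0" by simp
    then show ?case by blast
  next
    case (step u w)
    then obtain k where "(block_parent P n ^^ k) u = 0" by blast
    then have "(block_parent P n ^^ Suc k) w = 0"
      using block_parent_eqI[OF step(2)] by (simp only: funpow_Suc_right comp_def)
    then show ?case by blast
  qed
  show ?thesis
    unfolding rooted_trees_def
  proof (intro CollectI conjI ballI allI impI)
    fix i assume i: "i \<in> {1..n}"
    show "block_parent P n i \<in> {0..n}" using block_tree_edge_in[OF tree block_parent_edge[OF i]] by auto
    show "\<exists>k. (block_parent P n ^^ k) i = 0" by (rule reach[OF block_treeD(5)[OF tree i]])
  next
    fix j assume "j \<notin> {1..n}"
    then show "block_parent P n j = 0" unfolding block_parent_def by (rule if_not_P)
  qed
qed

lemma block_parent_enriched_tree: "(block_parent P n, P) \<in> enriched_trees n"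
proof -
  have "partition_on (children n (block_parent P n) i) (P i)" for i
    unfolding children_block_parent
  proof (rule partition_onI)
    fix p q assume "p \<in> P i" "q \<in> P i" "p \<noteq> q"
    then show "disjnt p q" using block_treeD(4)[OF tree, of p i q i] unfolding disjnt_def by blast
  qed (use block_treeD(2)[OF tree] in auto)
  then show ?thesis
    unfolding enriched_trees_def using block_parent_rooted_tree block_treeD(1)[OF tree] by auto
qed

end

lemma bij_betw_snd_enriched_trees: "bij_betw snd (enriched_trees n) (block_trees 0 {1..n})"
  unfolding bij_betw_def
proof (intro conjI inj_onI equalityI subsetI)
  fix x y assume x: "x \<in> enriched_trees n" and y: "y \<in> enriched_trees n" and eq: "snd x = snd y"
  obtain par par' P where xy: "x = (par, P)" "y = (par', P)" using eq by (cases x, cases y) auto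
  have E: "(par, P) \<in> enriched_trees n" and E': "(par', P) \<in> enriched_trees n" using x y xy by auto
  have "par j = par' j" for j
  proof (cases "j \<in> {1..n}")
    case True
    then obtain J where J: "J \<in> P (par' j)" "j \<in> J"
      using enriched_trees_parent_edge[OF E'] by (auto simp: block_edge_def)
    then show ?thesis using enriched_trees_block(3)[OF E J(1)] by (auto simp: children_def)
  qed (simp add: enriched_treesD(3)[OF E] enriched_treesD(3)[OF E'])
  then show "x = y" using xy by auto
next
  fix P assume "P \<in> snd ` enriched_trees n"
  then show "P \<in> block_trees 0 {1..n}" using enriched_tree_block_tree by (force simp: block_trees_def)
next
  fix P assume "P \<in> block_trees 0 {1..n}"
  then have "(block_parent P n, P) \<in> enriched_trees n"
    using block_parent_enriched_tree by (simp add: block_trees_def)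
  then show "P \<in> snd ` enriched_trees n" by force
qed

lemma tree_weight_eq_block_weight:
  assumes tree: "block_tree 0 {1..n} P"
  shows "tree_weight A n P xs0 = block_weight (\<lambda>i J. A (xs0 ! i) (args (\<lambda>j. xs0 ! j) J)) P"
proof -
  have "Sigma {0..n} P = blocks P"
  proof (intro equalityI subsetI)
    fix x assume "x \<in> blocks P"
    then obtain i J where x: "x = (i, J)" "J \<in> P i" by (auto simp: blocks_def)
    then have "i \<in> insert 0 {1..n}" using block_treeD(1)[OF tree, of i] by blast
    then show "x \<in> Sigma {0..n} P" using x by auto
  qed (auto simp: blocks_def)
  moreover have "\<forall>i\<in>{0..n}. finite (P i)"
    using block_treeD(3)[OF tree] by (meson finite_Pow_iff finite_atLeastAtMost finite_subset subsetI PowI)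
  ultimately show ?thesis unfolding tree_weight_def block_weight_def by (simp add: prod.Sigma)
qed

lemma args_nth_Cons: "args (\<lambda>i. (q # xs) ! i) {1..length xs} = xs"
proof -
  have "sorted_list_of_set {1..length xs} = [1..<Suc (length xs)]"
    by (metis atLeastLessThanSuc_atLeastAtMost sorted_list_of_set_range)
  then show ?thesis unfolding args_def by (intro nth_equalityI) (simp_all del: upt_Suc add: nth_upt)
qed

theorem mainTheorem4:
  fixes A :: "'a \<Rightarrow> 'a list \<Rightarrow> complex" and t :: "'a \<Rightarrow> 'a list \<Rightarrow> complex"
  assumes symA: "\<forall>q xs ys. mset xs = mset ys \<longrightarrow> A q xs = A q ys"
    and symt: "\<forall>q xs ys. mset xs = mset ys \<longrightarrow> t q xs = t q ys"
    and FP: "\<forall>q xs. xs \<noteq> [] \<longrightarrow> t q xs = FP_rhs A t q xs"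
  shows "\<forall>q xs. xs \<noteq> [] \<longrightarrow>
           t q xs = (\<Sum>(par, P)\<in>enriched_trees (length xs). tree_weight A (length xs) P (q # xs))"
proof (intro allI impI)
  interpret symmetric_fixed_point A t using assms by unfold_locales
  fix q and xs :: "'a list" assume "xs \<noteq> []"
  define n where "n = length xs"
  define y where "y = (\<lambda>i. (q # xs) ! i)"
  have "{1..n} \<noteq> {}" using \<open>xs \<noteq> []\<close> by (simp add: n_def Suc_le_eq)
  then have "t q xs = tz t (y 0) y {1..n}" using args_nth_Cons[of q xs] by (simp add: tz_def y_def n_def)
  also have "\<dots> = (\<Sum>P\<in>block_trees 0 {1..n}. block_weight (\<lambda>i J. A (y i) (args y J)) P)"
    by (rule tz_eq_sum_block_trees) auto
  also have "\<dots> = (\<Sum>P\<in>block_trees 0 {1..n}. tree_weight A n P (q # xs))"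
    by (rule sum.cong) (simp_all add: tree_weight_eq_block_weight block_trees_def y_def)
  also have "\<dots> = (\<Sum>x\<in>enriched_trees n. tree_weight A n (snd x) (q # xs))"
    by (rule sum.reindex_bij_betw[OF bij_betw_snd_enriched_trees, symmetric])
  also have "\<dots> = (\<Sum>(par, P)\<in>enriched_trees n. tree_weight A n P (q # xs))"
    by (simp add: split_def)
  finally show "t q xs = (\<Sum>(par, P)\<in>enriched_trees (length xs). tree_weight A (length xs) P (q # xs))"
    by (simp add: n_def)
qed

end
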